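(* Let $p$ be a prime. Then $$I_{p^{p+1}}=\Big(p,\prod_{i=0}^{p-1}(X-i)\Big)^{p+1}+\big(H(X)\big),\qquad H(X)=\prod_{i=0}^{p^2-1}(X-i).$$
   Context: $I_{p^n}=p^n\mathrm{Int}(\mathbb{Z})\cap\mathbb{Z}[X]=\{f\in\mathbb{Z}[X] : p^n\mid f(a)\text{ for all }a\in\mathbb{Z}\}$, where $\mathrm{Int}(\mathbb{Z})=\{f\in\mathbb{Q}[X]: f(\mathbb{Z})\subseteq\mathbb{Z}\}$. *)

theory Defs
  imports "HOL-Computational_Algebra.Polynomial"
begin

definition is_ideal :: "'a::comm_ring_1 set \<Rightarrow> bool" where
  "is_ideal J \<longleftrightarrow> 0 \<in> J \<and> (\<forall>x\<in>J. \<forall>y\<in>J. x + y \<in> J) \<and> (\<forall>r. \<forall>x\<in>J. r * x \<in> J)"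

definition ideal_gen :: "'a::comm_ring_1 set \<Rightarrow> 'a set" where
  "ideal_gen S = \<Inter>{J. is_ideal J \<and> S \<subseteq> J}"

definition ideal_sum :: "'a::comm_ring_1 set \<Rightarrow> 'a set \<Rightarrow> 'a set" where
  "ideal_sum I J = ideal_gen (I \<union> J)"

definition ideal_prod :: "'a::comm_ring_1 set \<Rightarrow> 'a set \<Rightarrow> 'a set" where
  "ideal_prod I J = ideal_gen {a * b | a b. a \<in> I \<and> b \<in> J}"

fun ideal_pow :: "'a::comm_ring_1 set \<Rightarrow> nat \<Rightarrow> 'a set" where
  "ideal_pow I 0 = UNIV"
| "ideal_pow I (Suc n) = ideal_prod I (ideal_pow I n)"

definition I_div :: "int \<Rightarrow> int poly set" where
  "I_div m = {f. \<forall>a::int. m dvd poly f a}"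

end

theory Submission
  imports Defs
begin

(*
  Write F k = X(X-1)...(X-k+1) for the falling-factorial polynomials.  The inclusion "\<supseteq>"
  holds because p divides every product of p consecutive integers and p^(p+1) divides every
  product of p^2 consecutive integers.  For "\<subseteq>" we expand f in the monic basis (F k):
  f = \<Sum> c_k F_k.  Evaluating at m = 0, 1, 2, ... (where F k (m) = k! * (m choose k)) shows
  inductively that p^(p+1) divides c_k * k!.  The term c_k F_k then lies in the right-hand
  ideal: if k \<ge> p^2 it is a multiple of F (p^2); if k < p^2, then k! = p^(k div p) * u with u
  prime to p, so p^(p+1 - k div p) divides c_k, while F k lies in (p, F p)^(k div p) since every
  block of p consecutive linear factors is congruent to F p modulo p.
*)

lemma is_ideal_gen: "is_ideal (ideal_gen S)"
  unfolding is_ideal_def ideal_gen_def by auto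

lemma ideal_gen_superset: "S \<subseteq> ideal_gen S"
  unfolding ideal_gen_def by auto

lemma ideal_gen_least: "is_ideal J \<Longrightarrow> S \<subseteq> J \<Longrightarrow> ideal_gen S \<subseteq> J"
  unfolding ideal_gen_def by auto

lemma ideal_mult_left: "is_ideal J \<Longrightarrow> x \<in> J \<Longrightarrow> r * x \<in> J"
  by (simp add: is_ideal_def)

lemma ideal_mult_right: "is_ideal J \<Longrightarrow> x \<in> J \<Longrightarrow> x * r \<in> J"
  using ideal_mult_left[of J x r] by (simp add: mult.commute)

lemma ideal_add: "is_ideal J \<Longrightarrow> x \<in> J \<Longrightarrow> y \<in> J \<Longrightarrow> x + y \<in> J"
  by (simp add: is_ideal_def)

lemma ideal_sum_closed:
  assumes "is_ideal J" "finite A" "\<And>i. i \<in> A \<Longrightarrow> f i \<in> J"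
  shows "sum f A \<in> J"
  using assms(2,3) by (induction A rule: finite_induct) (use assms(1) in \<open>auto simp: is_ideal_def\<close>)

lemma is_ideal_sum: "is_ideal (ideal_sum I J)"
  unfolding ideal_sum_def by (rule is_ideal_gen)

lemma ideal_sum_upper: "I \<subseteq> ideal_sum I J" "J \<subseteq> ideal_sum I J"
  unfolding ideal_sum_def using ideal_gen_superset by blast+

lemma is_ideal_pow: "is_ideal (ideal_pow I n)"
  by (cases n) (simp_all add: ideal_prod_def is_ideal_gen, simp add: is_ideal_def)

lemma ideal_pow_Suc_mem: "x \<in> I \<Longrightarrow> y \<in> ideal_pow I n \<Longrightarrow> x * y \<in> ideal_pow I (Suc n)"
  unfolding ideal_pow.simps ideal_prod_def by (rule subsetD[OF ideal_gen_superset]) blast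

lemma ideal_pow_scale: "c \<in> I \<Longrightarrow> y \<in> ideal_pow I q \<Longrightarrow> c ^ m * y \<in> ideal_pow I (q + m)"
proof (induction m)
  case (Suc m)
  have "c * (c ^ m * y) \<in> ideal_pow I (Suc (q + m))"
    by (rule ideal_pow_Suc_mem) (use Suc in auto)
  then show ?case by (simp add: mult.assoc)
qed simp

lemma is_ideal_I_div: "is_ideal (I_div m)"
  unfolding is_ideal_def I_div_def by auto

lemma ideal_prod_subset_I_div:
  "A \<subseteq> I_div a \<Longrightarrow> B \<subseteq> I_div b \<Longrightarrow> ideal_prod A B \<subseteq> I_div (a * b)"
  unfolding ideal_prod_def
  by (rule ideal_gen_least[OF is_ideal_I_div]) (auto simp: I_div_def mult_dvd_mono subset_iff)

lemma ideal_pow_subset_I_div: "A \<subseteq> I_div a \<Longrightarrow> ideal_pow A n \<subseteq> I_div (a ^ n)"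
proof (induction n)
  case 0 then show ?case by (auto simp: I_div_def)
next
  case (Suc n)
  have "ideal_prod A (ideal_pow A n) \<subseteq> I_div (a * a ^ n)"
    by (rule ideal_prod_subset_I_div) (use Suc in auto)
  then show ?case by simp
qed

lemma prod_lessThan_add: "(\<Prod>i<(a::nat) + b. g i) = (\<Prod>i<a. g i) * (\<Prod>r<b. g (a + r))"
  by (induction b) (simp_all add: mult.assoc)

lemma prod_lessThan_blocks: "(\<Prod>i<(q::nat) * n. g i) = (\<Prod>j<q. \<Prod>r<n. g (j * n + r))"
proof (induction q)
  case (Suc q)
  have "(\<Prod>i<Suc q * n. g i) = (\<Prod>i<q * n + n. g i)" by (simp add: add.commute)
  also have "\<dots> = (\<Prod>i<q * n. g i) * (\<Prod>r<n. g (q * n + r))" by (rule prod_lessThan_add)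
  finally show ?case using Suc by simp
qed simp

text \<open>Among n consecutive integers one is divisible by n.\<close>
lemma dvd_prod_consecutive:
  assumes "0 < n"
  shows "int n dvd (\<Prod>i<n. a - int i)"
proof -
  define i0 where "i0 = nat (a mod int n)"
  have "i0 < n" unfolding i0_def using assms by (simp add: nat_less_iff)
  have "int i0 = a mod int n" unfolding i0_def using assms by simp
  then have "int n dvd a - int i0" by simp
  also have "\<dots> dvd (\<Prod>i<n. a - int i)" by (rule dvd_prodI) (use \<open>i0 < n\<close> in auto)
  finally show ?thesis .
qed

text \<open>p^(p+1) divides every product of p^2 consecutive integers: grouping the factors into p
  blocks of p, the factors congruent to a modulo p form p times a product of p consecutive
  integers.\<close>
lemma prime_pow_dvd_prod_consecutive_square:
  assumes "prime p"
  shows "int p ^ (p + 1) dvd (\<Prod>i<p^2. a - int i)"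
proof -
  have p0: "0 < p" using assms prime_gt_0_nat by blast
  define r0 where "r0 = nat (a mod int p)"
  define t where "t = a div int p"
  have r0: "int r0 = a mod int p" unfolding r0_def using p0 by simp
  have "r0 < p" unfolding r0_def using p0 by (simp add: nat_less_iff)
  have a: "a = int p * t + int r0" unfolding t_def r0 by simp
  have blocks: "(\<Prod>i<p^2. a - int i) = (\<Prod>j<p. \<Prod>r<p. a - int (j * p + r))"
    unfolding power2_eq_square by (rule prod_lessThan_blocks)
  have residue_class: "(\<Prod>j<p. a - int (j * p + r0)) = int p ^ p * (\<Prod>j<p. t - int j)"
  proof -
    have "(\<Prod>j<p. a - int (j * p + r0)) = (\<Prod>j<p. int p * (t - int j))"
      by (rule prod.cong) (simp_all add: a algebra_simps)
    then show ?thesis by (simp add: prod.distrib)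
  qed
  have "int p ^ (p + 1) dvd int p ^ p * (\<Prod>j<p. t - int j)"
    using dvd_prod_consecutive[OF p0, of t] by (simp add: mult_dvd_mono)
  also have "\<dots> dvd (\<Prod>j<p. \<Prod>r<p. a - int (j * p + r))"
    unfolding residue_class[symmetric]
    by (rule prod_dvd_prod, rule dvd_prodI) (use \<open>r0 < p\<close> in auto)
  finally show ?thesis unfolding blocks .
qed

section \<open>Falling-factorial polynomials\<close>

definition falling_poly :: "nat \<Rightarrow> int poly" where
  "falling_poly k = (\<Prod>i<k. [:- int i, 1:])"

lemma poly_falling_poly: "poly (falling_poly k) x = (\<Prod>i<k. x - int i)"
  by (simp add: falling_poly_def poly_prod)

lemma falling_poly_add:
  "falling_poly (a + b) = falling_poly a * (\<Prod>r<b. [:- int (a + r), 1:])"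
  unfolding falling_poly_def by (rule prod_lessThan_add)

lemma falling_poly_monic: "degree (falling_poly k) = k" "coeff (falling_poly k) k = 1"
proof -
  show deg: "degree (falling_poly k) = k"
    unfolding falling_poly_def by (subst degree_prod_eq_sum_degree) simp_all
  have "lead_coeff (falling_poly k) = 1"
    unfolding falling_poly_def lead_coeff_prod by simp
  then show "coeff (falling_poly k) k = 1" by (simp only: deg)
qed

text \<open>Every integer polynomial is an integer combination of falling factorials, since these
  form a monic basis (one of each degree).\<close>
lemma falling_poly_expansion:
  "degree f \<le> n \<Longrightarrow> \<exists>c. f = (\<Sum>k\<le>n. smult (c k) (falling_poly k))"
proof (induction n arbitrary: f)
  case 0
  then have "f = [:coeff f 0:]" using degree_0_id[of f] by simp
  then show ?case by (intro exI[of _ "\<lambda>_. coeff f 0"]) (simp add: falling_poly_def)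
next
  case (Suc n)
  define g where "g = f - smult (coeff f (Suc n)) (falling_poly (Suc n))"
  have "degree g \<le> Suc n" unfolding g_def using Suc.prems falling_poly_monic[of "Suc n"]
    by (metis degree_diff_le degree_smult_le order_trans)
  moreover have "coeff g (Suc n) = 0" unfolding g_def using falling_poly_monic[of "Suc n"] by simp
  ultimately have "degree g \<le> n" by (metis le_SucE leading_coeff_0_iff degree_0 le0)
  then obtain c where c: "g = (\<Sum>k\<le>n. smult (c k) (falling_poly k))" using Suc.IH by blast
  define c' where "c' = c(Suc n := coeff f (Suc n))"
  have "(\<Sum>k\<le>n. smult (c' k) (falling_poly k)) = (\<Sum>k\<le>n. smult (c k) (falling_poly k))"
    by (rule sum.cong) (auto simp: c'_def)
  then have "f = (\<Sum>k\<le>Suc n. smult (c' k) (falling_poly k))"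
    using c unfolding g_def by (simp add: c'_def algebra_simps)
  then show ?case by blast
qed

lemma falling_value_le:
  "k \<le> m \<Longrightarrow> (\<Prod>i<k. int m - int i) = fact k * int (m choose k)"
proof (induction k)
  case (Suc k)
  have "(\<Prod>i<Suc k. int m - int i) = fact k * int ((m - k) * (m choose k))"
    using Suc by (simp add: of_nat_diff)
  also have "(m - k) * (m choose k) = Suc k * (m choose Suc k)"
    by (metis binomial_absorb_comp binomial_absorption)
  finally show ?case by (simp add: algebra_simps)
qed simp

lemma falling_value_gt: "m < k \<Longrightarrow> (\<Prod>i<k. int m - int i) = 0"
  by (rule prod_zero) auto

text \<open>Evaluating at m isolates c_m * m! modulo the lower terms, which are
  multiples of c_k * k! (k < m) and hence divisible by M by induction.\<close>
lemma dvd_coeff_fact: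
  assumes dvd_values: "\<forall>a. M dvd poly f a"
    and expansion: "f = (\<Sum>k\<le>n. smult (c k) (falling_poly k))"
  shows "m \<le> n \<Longrightarrow> M dvd c m * fact m"
proof (induction m rule: less_induct)
  case (less m)
  define rest where "rest = (\<Sum>k\<in>{..n}-{m}. c k * (\<Prod>i<k. int m - int i))"
  have "poly f (int m) = (\<Sum>k\<le>n. c k * (\<Prod>i<k. int m - int i))"
    using expansion by (simp add: poly_sum poly_falling_poly)
  also have "\<dots> = c m * (\<Prod>i<m. int m - int i) + rest"
    unfolding rest_def using less.prems by (subst sum.remove[of _ m]) auto
  finally have at_m: "poly f (int m) = c m * fact m + rest"
    using falling_value_le[of m m] by simp
  have "M dvd rest"
    unfolding rest_def
  proof (rule dvd_sum)
    fix k assume k: "k \<in> {..n}-{m}"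
    show "M dvd c k * (\<Prod>i<k. int m - int i)"
    proof (cases "k < m")
      case True
      then have "M dvd c k * fact k * int (m choose k)" using less.IH less.prems by auto
      then show ?thesis using falling_value_le[of k m] True by (simp add: mult.assoc)
    next
      case False
      then show ?thesis using k by (simp add: falling_value_gt)
    qed
  qed
  then show ?case using dvd_values at_m by (metis add_diff_cancel_right' dvd_diff)
qed

section \<open>The p-adic valuation of k! for k < p^2\<close>

text \<open>Below p^2 the only multiples of p among 1..k are p, 2p, ..., each contributing a single
  factor p, so k! = p^(k div p) * u with u prime to p.\<close>
lemma fact_below_prime_square:
  assumes "prime p"
  shows "k < p^2 \<Longrightarrow> \<exists>u. (fact k :: int) = int p ^ (k div p) * u \<and> coprime (int p) u"
proof (induction k)
  case 0 then show ?case by (intro exI[of _ 1]) simp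
next
  case (Suc k)
  have p_prime: "prime (int p)" using assms by simp
  have p1: "p > 1" using assms prime_gt_1_nat by blast
  obtain u where u: "(fact k :: int) = int p ^ (k div p) * u" "coprime (int p) u"
    using Suc by auto
  text \<open>Write Suc k = p^e * v where e counts the new factor p (at most one) and v is prime to p.\<close>
  obtain e v where new_factor: "int (Suc k) = int p ^ e * v" "Suc k div p = k div p + e"
    "coprime (int p) v"
  proof (cases "p dvd Suc k")
    case True
    define j where "j = Suc k div p"
    have sk: "Suc k = p * j" using True unfolding j_def by simp
    have "j > 0" using sk by (cases j) auto
    have "p * j < p * p" using Suc.prems sk by (simp add: power2_eq_square)
    then have "j < p" by simp
    have "k = (p - 1) + p * (j - 1)" using sk \<open>j > 0\<close> p1 by (cases j) (auto simp: algebra_simps)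
    then have "k div p = (j - 1) + (p - 1) div p"
      using div_mult_self2[of p "p - 1" "j - 1"] p1 by simp
    then have "k div p = j - 1" using p1 by simp
    then have "Suc k div p = k div p + 1" using \<open>j > 0\<close> unfolding j_def by simp
    moreover have "\<not> int p dvd int j" using \<open>j > 0\<close> \<open>j < p\<close> by (simp add: nat_dvd_not_less)
    then have "coprime (int p) (int j)" using p_prime prime_imp_coprime by blast
    ultimately show ?thesis using that[of 1 "int j"] sk by simp
  next
    case False
    then have "Suc k div p = k div p" using p1 by (simp add: div_Suc dvd_eq_mod_eq_0 gr0I)
    moreover have "coprime (int p) (int (Suc k))"
      using False p_prime prime_imp_coprime by (metis int_dvd_int_iff)
    ultimately show ?thesis using that[of 0 "int (Suc k)"] by simp
  qed
  have "(fact (Suc k) :: int) = int p ^ (Suc k div p) * (v * u)"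
    using u(1) new_factor(1,2) by (simp add: power_add algebra_simps)
  moreover have "coprime (int p) (v * u)" using new_factor(3) u(2) by simp
  ultimately show ?case by blast
qed

definition base_ideal :: "nat \<Rightarrow> int poly set" where
  "base_ideal p = ideal_gen {[:int p:], falling_poly p}"

lemma prod_perturb:
  fixes x y :: "'b \<Rightarrow> 'a::comm_ring_1"
  shows "finite A \<Longrightarrow> \<exists>z. (\<Prod>r\<in>A. x r + c * y r) = (\<Prod>r\<in>A. x r) + c * z"
proof (induction A rule: finite_induct)
  case empty then show ?case by (intro exI[of _ 0]) simp
next
  case (insert a A)
  then obtain z where z: "(\<Prod>r\<in>A. x r + c * y r) = (\<Prod>r\<in>A. x r) + c * z" by blast
  show ?case
    by (intro exI[of _ "y a * ((\<Prod>r\<in>A. x r) + c * z) + x a * z"])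
       (simp add: insert z algebra_simps)
qed

text \<open>Each block of p consecutive linear factors (X - jp)(X - jp - 1)...(X - jp - p + 1) is
  congruent to F p modulo p, hence lies in (p, F p).\<close>
lemma block_in_base_ideal:
  "(\<Prod>r<p. [:- int (j * p + r), 1:]) \<in> base_ideal p"
proof -
  have shift: "[:- int (j * p + r), 1:] = [:- int r, 1:] + [:int p:] * [:- int j:]" for r
    by (simp add: algebra_simps)
  obtain z where "(\<Prod>r<p. [:- int r, 1:] + [:int p:] * [:- int j:])
      = (\<Prod>r<p. [:- int r, 1:]) + [:int p:] * z"
    using prod_perturb[of "{..<p}" "\<lambda>r. [:- int r, 1:]" "[:int p:]" "\<lambda>r. [:- int j:]"] by auto
  then have "(\<Prod>r<p. [:- int (j * p + r), 1:]) = falling_poly p + [:int p:] * z"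
    unfolding shift falling_poly_def by simp
  moreover have "falling_poly p \<in> base_ideal p" "[:int p:] \<in> base_ideal p"
    unfolding base_ideal_def using ideal_gen_superset by blast+
  ultimately show ?thesis
    using ideal_add[OF is_ideal_gen] ideal_mult_right[OF is_ideal_gen] unfolding base_ideal_def
    by metis
qed

text \<open>Splitting F k into k div p full blocks of p factors and a remainder gives
  F k \<in> (p, F p)^(k div p).\<close>
lemma falling_poly_in_base_ideal_pow: "falling_poly k \<in> ideal_pow (base_ideal p) (k div p)"
proof -
  have multiple: "falling_poly (q * p) \<in> ideal_pow (base_ideal p) q" for q
  proof (induction q)
    case (Suc q)
    have "falling_poly (Suc q * p) = falling_poly (q * p + p)" by (simp add: add.commute)
    also have "\<dots> = (\<Prod>r<p. [:- int (q * p + r), 1:]) * falling_poly (q * p)"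
      by (simp add: falling_poly_add mult.commute)
    finally show ?case using ideal_pow_Suc_mem[OF block_in_base_ideal Suc] by simp
  qed simp
  have "falling_poly k = falling_poly ((k div p) * p + k mod p)" by simp
  also have "\<dots> = falling_poly ((k div p) * p) * (\<Prod>r<k mod p. [:- int ((k div p) * p + r), 1:])"
    by (rule falling_poly_add)
  finally show ?thesis using ideal_mult_right[OF is_ideal_pow multiple] by metis
qed

lemma falling_poly_in_gen_lower:
  assumes "n \<le> k"
  shows "falling_poly k \<in> ideal_gen {falling_poly n}"
proof -
  have "falling_poly k = falling_poly (n + (k - n))" using assms by simp
  also have "\<dots> = falling_poly n * (\<Prod>r<k - n. [:- int (n + r), 1:])"
    by (rule falling_poly_add)
  finally show ?thesis
    using ideal_mult_right[OF is_ideal_gen, of "falling_poly n" "{falling_poly n}"]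
      ideal_gen_superset by auto
qed

definition target_ideal :: "nat \<Rightarrow> int poly set" where
  "target_ideal p = ideal_sum (ideal_pow (base_ideal p) (p + 1)) (ideal_gen {falling_poly (p^2)})"

text \<open>Both kinds of generators take values divisible by p^(p+1).\<close>
lemma target_ideal_subset_I_div:
  assumes "prime p"
  shows "target_ideal p \<subseteq> I_div (int p ^ (p + 1))"
  unfolding target_ideal_def ideal_sum_def
proof (rule ideal_gen_least[OF is_ideal_I_div], rule Un_least)
  have "0 < p" using assms prime_gt_0_nat by blast
  then have "base_ideal p \<subseteq> I_div (int p)"
    unfolding base_ideal_def
    by (intro ideal_gen_least[OF is_ideal_I_div])
       (auto simp: I_div_def poly_falling_poly dvd_prod_consecutive)
  then show "ideal_pow (base_ideal p) (p + 1) \<subseteq> I_div (int p ^ (p + 1))"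
    by (rule ideal_pow_subset_I_div)
  show "ideal_gen {falling_poly (p^2)} \<subseteq> I_div (int p ^ (p + 1))"
    using prime_pow_dvd_prod_consecutive_square[OF assms]
    by (intro ideal_gen_least[OF is_ideal_I_div])
       (auto simp: I_div_def poly_falling_poly simp del: power_Suc)
qed

text \<open>For k < p^2, dividing p^(p+1) | c * k! by the p-part of k! leaves p^(p+1 - k div p) | c.\<close>
lemma prime_pow_dvd_coeff:
  assumes "prime p" "k < p^2" "int p ^ (p + 1) dvd c * fact k"
  shows "int p ^ (p + 1 - k div p) dvd c"
proof -
  define q where "q = k div p"
  have "0 < p" using assms(1) prime_gt_0_nat by blast
  have "q < p" unfolding q_def using assms(2) \<open>0 < p\<close>
    by (simp add: div_less_iff_less_mult power2_eq_square)
  obtain u where u: "(fact k :: int) = int p ^ q * u" "coprime (int p) u"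
    using fact_below_prime_square[OF assms(1,2)] unfolding q_def by blast
  have "int p ^ q * int p ^ (p + 1 - q) dvd int p ^ q * (c * u)"
    using assms(3) u(1) \<open>q < p\<close> by (simp add: power_add[symmetric] algebra_simps)
  then have "int p ^ (p + 1 - q) dvd c * u" using \<open>0 < p\<close> by simp
  moreover have "coprime (int p ^ (p + 1 - q)) u" using u(2) by simp
  ultimately show ?thesis unfolding q_def using coprime_dvd_mult_left_iff by blast
qed

text \<open>A term c F_k with p^(p+1) | c * k! lies in the target ideal: for k \<ge> p^2 through F (p^2),
  otherwise as p^(p+1 - k div p) times an element of (p, F p)^(k div p).\<close>
lemma term_in_target_ideal:
  assumes "prime p" "int p ^ (p + 1) dvd c * fact k"
  shows "smult c (falling_poly k) \<in> target_ideal p"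
proof (cases "p^2 \<le> k")
  case True
  then have "[:c:] * falling_poly k \<in> target_ideal p"
    using falling_poly_in_gen_lower ideal_sum_upper(2) is_ideal_sum unfolding target_ideal_def
    by (metis ideal_mult_left subsetD)
  then show ?thesis by simp
next
  case False
  define q where "q = k div p"
  have "q < p" unfolding q_def using False prime_gt_0_nat[OF assms(1)]
    by (simp add: div_less_iff_less_mult power2_eq_square)
  obtain d where d: "c = int p ^ (p + 1 - q) * d"
    using prime_pow_dvd_coeff[OF assms(1) _ assms(2)] False unfolding q_def by (meson dvdE not_le)
  have "smult d (falling_poly k) \<in> ideal_pow (base_ideal p) q"
    using ideal_mult_left[OF is_ideal_pow falling_poly_in_base_ideal_pow, of "[:d:]" k p]
    unfolding q_def by simp
  then have "[:int p:] ^ (p + 1 - q) * smult d (falling_poly k)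
      \<in> ideal_pow (base_ideal p) (q + (p + 1 - q))"
    by (rule ideal_pow_scale[rotated]) (simp add: base_ideal_def ideal_gen_superset[THEN subsetD])
  moreover have "q + (p + 1 - q) = p + 1" using \<open>q < p\<close> by simp
  moreover have "[:int p:] ^ (p + 1 - q) * smult d (falling_poly k) = smult c (falling_poly k)"
  proof -
    have "[:int p:] ^ m = [:int p ^ m:]" for m by (induction m) simp_all
    then show ?thesis unfolding d by (simp add: mult.commute)
  qed
  ultimately show ?thesis using ideal_sum_upper(1) unfolding target_ideal_def by auto
qed

text \<open>Expanding f in the falling-factorial basis, every term lies in the target ideal by the
  coefficient criterion.\<close>
lemma I_div_subset_target_ideal:
  assumes "prime p"
  shows "I_div (int p ^ (p + 1)) \<subseteq> target_ideal p"
proof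
  fix f assume f: "f \<in> I_div (int p ^ (p + 1))"
  obtain c where c: "f = (\<Sum>k\<le>degree f. smult (c k) (falling_poly k))"
    using falling_poly_expansion by blast
  have "int p ^ (p + 1) dvd c k * fact k" if "k \<le> degree f" for k
    using dvd_coeff_fact[OF _ c that] f by (simp add: I_div_def)
  then have "smult (c k) (falling_poly k) \<in> target_ideal p" if "k \<le> degree f" for k
    using term_in_target_ideal[OF assms] that by blast
  then have "(\<Sum>k\<le>degree f. smult (c k) (falling_poly k)) \<in> target_ideal p"
    unfolding target_ideal_def by (intro ideal_sum_closed[OF is_ideal_sum]) auto
  then show "f \<in> target_ideal p" using c by simp
qed

theorem mainTheorem18:
  fixes p :: nat
  assumes "prime p"
  shows "I_div (int p ^ (p + 1)) =
    ideal_sum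
      (ideal_pow (ideal_gen {[:int p:], (\<Prod>i<p. [:- int i, 1:])}) (p + 1))
      (ideal_gen {\<Prod>i<p^2. [:- int i, 1:]})"
proof -
  have "I_div (int p ^ (p + 1)) = target_ideal p"
    using I_div_subset_target_ideal[OF assms] target_ideal_subset_I_div[OF assms] by (rule equalityI)
  then show ?thesis unfolding target_ideal_def base_ideal_def falling_poly_def .
qed

end
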